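(* Let $(c_k)_{k\ge0}$ be any non-decreasing positive sequence. Under the DecSPS-NS stepsize (defined in the context), for every $k\in\mathbb{N}$, $\frac{c_0\gamma_\ell}{c_k}\le\gamma_k\le\frac{c_0\gamma_b}{c_k}$, and $\gamma_k\le\gamma_{k-1}$.
   Context: For $\mathcal S\subseteq[n]$, $f_{\mathcal S}:=\frac1{|\mathcal S|}\sum_{i\in\mathcal S}f_i$ with each $f_i:\mathbb{R}^d\to\mathbb{R}$ convex and lower bounded, $f^*_{\mathcal S}:=\inf_xf_{\mathcal S}(x)$, $\ell^*_{\mathcal S}$ a given real number with $\ell^*_{\mathcal S}\le f^*_{\mathcal S}$, and $g_{\mathcal S}(x)$ a subgradient of $f_{\mathcal S}$ at $x$. For any sequence of minibatches $\mathcal S_k$ and points $x^k$ with $g_{\mathcal S_k}(x^k)\neq0$, the DecSPS-NS stepsize is $\gamma_k:=\frac1{c_k}\min\left\{\max\left\{c_0\gamma_\ell,\ \frac{f_{\mathcal S_k}(x^k)-\ell^*_{\mathcal S_k}}{\|g_{\mathcal S_k}(x^k)\|^2}\right\},\ c_{k-1}\gamma_{k-1}\right\}$ for $k\ge0$, with $c_{-1}=c_0$, $\gamma_{-1}=\gamma_b$, where $0<\gamma_\ell\le\gamma_b$ are fixed constants. *)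

theory Defs
  imports "HOL-Analysis.Analysis"
begin

definition fS :: "(nat \<Rightarrow> real ^ 'd \<Rightarrow> real) \<Rightarrow> nat set \<Rightarrow> real ^ 'd \<Rightarrow> real" where
  "fS f S x = (\<Sum>i\<in>S. f i x) / real (card S)"

text \<open>Index k of the paper is k here; the convention
  c_{-1} = c_0, gamma_{-1} = gamma_b is built into the k = 0 equation.
  q k is the Polyak ratio (f_{S_k}(x^k) - l*_{S_k}) / ||g_{S_k}(x^k)||^2.\<close>
primrec decsps_ns :: "(nat \<Rightarrow> real) \<Rightarrow> real \<Rightarrow> real \<Rightarrow> (nat \<Rightarrow> real) \<Rightarrow> nat \<Rightarrow> real" where
  "decsps_ns c gl gb q 0 = (1 / c 0) * min (max (c 0 * gl) (q 0)) (c 0 * gb)"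
| "decsps_ns c gl gb q (Suc k) =
     (1 / c (Suc k)) * min (max (c 0 * gl) (q (Suc k))) (c k * decsps_ns c gl gb q k)"

end

theory Submission
  imports Defs
begin

text \<open>The scaled stepsize \<open>c k * \<gamma> k\<close> is the Polyak ratio clipped from below by \<open>c 0 * gl\<close>
  and from above by the previous scaled stepsize, the first upper clip being \<open>c 0 * gb\<close>.
  Hence it stays in \<open>[c 0 * gl, c 0 * gb]\<close> and is non-increasing, whatever the ratios are;
  dividing by the non-decreasing \<open>c k\<close> keeps \<open>\<gamma> k\<close> non-increasing.\<close>

lemma decsps_ns_0_scaled:
  assumes "c 0 \<noteq> 0"
  shows "c 0 * decsps_ns c gl gb q 0 = min (max (c 0 * gl) (q 0)) (c 0 * gb)"
  using assms by simp

lemma decsps_ns_Suc_scaled: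
  assumes "c (Suc k) \<noteq> 0"
  shows "c (Suc k) * decsps_ns c gl gb q (Suc k)
           = min (max (c 0 * gl) (q (Suc k))) (c k * decsps_ns c gl gb q k)"
  using assms by simp

lemma decsps_ns_scaled_bounds:
  fixes c :: "nat \<Rightarrow> real"
  assumes c_pos: "\<And>k. c k > 0" and gl_le_gb: "gl \<le> gb"
  shows "c 0 * gl \<le> c k * decsps_ns c gl gb q k \<and> c k * decsps_ns c gl gb q k \<le> c 0 * gb"
proof (induction k)
  case 0
  have "c 0 * gl \<le> c 0 * gb"
    using c_pos[of 0] gl_le_gb by simp
  then show ?case
    using c_pos[of 0] by (simp only: decsps_ns_0_scaled) linarith
next
  case (Suc k)
  then show ?case
    using c_pos[of "Suc k"] by (simp only: decsps_ns_Suc_scaled) linarith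
qed

lemma decsps_ns_nonneg:
  fixes c :: "nat \<Rightarrow> real"
  assumes c_pos: "\<And>k. c k > 0" and gl_nonneg: "0 \<le> gl" and gl_le_gb: "gl \<le> gb"
  shows "0 \<le> decsps_ns c gl gb q k"
proof -
  have "0 \<le> c 0 * gl"
    using c_pos[of 0] gl_nonneg by simp
  also have "\<dots> \<le> c k * decsps_ns c gl gb q k"
    using decsps_ns_scaled_bounds[where c=c, OF c_pos gl_le_gb] by blast
  finally have "0 \<le> c k * decsps_ns c gl gb q k" .
  then show ?thesis
    using c_pos[of k] by (simp add: zero_le_mult_iff)
qed

lemma decsps_ns_Suc_le:
  fixes c :: "nat \<Rightarrow> real"
  assumes c_pos: "\<And>k. c k > 0" and c_mono: "mono c"
    and gl_nonneg: "0 \<le> gl" and gl_le_gb: "gl \<le> gb"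
  shows "decsps_ns c gl gb q (Suc k) \<le> decsps_ns c gl gb q k"
proof -
  let ?\<gamma> = "decsps_ns c gl gb q"
  have "c (Suc k) * ?\<gamma> (Suc k) \<le> c k * ?\<gamma> k"
    using c_pos[of "Suc k"] by (simp add: decsps_ns_Suc_scaled)
  also have "\<dots> \<le> c (Suc k) * ?\<gamma> k"
    using c_mono decsps_ns_nonneg[where c=c, OF c_pos gl_nonneg gl_le_gb]
    by (intro mult_right_mono) (auto simp: monoD)
  finally show ?thesis
    by (metis c_pos mult_le_cancel_left_pos)
qed

theorem lemma6:
  fixes n :: nat
    and f :: "nat \<Rightarrow> real ^ 'd \<Rightarrow> real"
    and ell :: "nat set \<Rightarrow> real"
    and g :: "nat set \<Rightarrow> real ^ 'd \<Rightarrow> real ^ 'd"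
    and Sk :: "nat \<Rightarrow> nat set"
    and xk :: "nat \<Rightarrow> real ^ 'd"
    and c :: "nat \<Rightarrow> real"
    and gl gb :: real
  assumes convex: "\<And>i. i \<in> {1..n} \<Longrightarrow> convex_on UNIV (f i)"
    and lower_bdd: "\<And>i. i \<in> {1..n} \<Longrightarrow> bdd_below (range (f i))"
    and ell_le: "\<And>S. S \<subseteq> {1..n} \<Longrightarrow> S \<noteq> {} \<Longrightarrow> ell S \<le> (INF x. fS f S x)"
    and subgrad: "\<And>S x y. S \<subseteq> {1..n} \<Longrightarrow> S \<noteq> {} \<Longrightarrow>
                    fS f S y \<ge> fS f S x + g S x \<bullet> (y - x)"
    and batches: "\<And>k. Sk k \<subseteq> {1..n} \<and> Sk k \<noteq> {}"
    and g_nz: "\<And>k. g (Sk k) (xk k) \<noteq> 0"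
    and c_pos: "\<And>k. c k > 0"
    and c_mono: "mono c"
    and gl_pos: "0 < gl" and gl_le_gb: "gl \<le> gb"
  defines "\<gamma> \<equiv> decsps_ns c gl gb
             (\<lambda>k. (fS f (Sk k) (xk k) - ell (Sk k)) / (norm (g (Sk k) (xk k)))\<^sup>2)"
  shows "(\<forall>k. c 0 * gl / c k \<le> \<gamma> k \<and> \<gamma> k \<le> c 0 * gb / c k)
         \<and> \<gamma> 0 \<le> gb \<and> (\<forall>k. \<gamma> (Suc k) \<le> \<gamma> k)"
proof -
  have bounds: "c 0 * gl / c k \<le> \<gamma> k \<and> \<gamma> k \<le> c 0 * gb / c k" for k
    using decsps_ns_scaled_bounds[where c=c, OF c_pos gl_le_gb, where k=k] c_pos[of k]
    unfolding \<gamma>_def by (simp add: pos_divide_le_eq pos_le_divide_eq mult.commute)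
  moreover have "\<gamma> 0 \<le> gb"
    using bounds[of 0] c_pos[of 0] by simp
  moreover have "\<gamma> (Suc k) \<le> \<gamma> k" for k
    unfolding \<gamma>_def using gl_pos gl_le_gb by (intro decsps_ns_Suc_le c_pos c_mono) auto
  ultimately show ?thesis
    by blast
qed

end
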